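(* Let $A\in\mathbb{R}^{n\times m}$ with $n<m$ have nonzero columns $\alpha_1,\dots,\alpha_m$, let $c_{ij}=\langle\alpha_i,\alpha_j\rangle$, and for each $i\in[m]$ define $\nu(i)=\max_{j\neq i}\frac{|c_{ij}|}{c_{ii}}$ and $\rho(i)=\frac{\nu(i)}{\nu(i)+1}$. Let $\rho(i_1)\ge\rho(i_2)\ge\dots\ge\rho(i_m)$ be these scores sorted in non-increasing order, and let $l^*$ be the largest integer $l\in\{0,1,\dots,m\}$ such that $\sum_{j=1}^{l}\rho(i_j)<\frac12$ (equivalently, when it exists, $l^*=\min\{l:\sum_{j=1}^l\rho(i_j)\ge\frac12\}-1$). Then every $x\in\mathbb{R}^m$ with $\|x\|_0\le l^*$ is the unique minimizer of $\min_{z\in\mathbb{R}^m}\|z\|_1$ subject to $Az=Ax$; that is, the sparsity level $SL$ of $\ell_1$ minimization with sensing matrix $A$ satisfies $SL\ge l^*$.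
   Context: $[m]=\{1,\dots,m\}$; $\|x\|_0$ is the number of nonzero entries of $x$. The sparsity level $SL$ of $A$ is the largest integer $s$ such that every $x$ with $\|x\|_0\le s$ is correctly (uniquely) recovered as the minimizer of $\min\|z\|_1$ s.t. $Az=Ax$. *)

theory Defs
  imports "HOL-Analysis.Analysis"
begin

definition l0norm :: "real ^ 'm \<Rightarrow> nat" where
  "l0norm x = card {i. x $ i \<noteq> 0}"

definition l1norm :: "real ^ 'm \<Rightarrow> real" where
  "l1norm x = (\<Sum>i\<in>UNIV. \<bar>x $ i\<bar>)"

definition l1_unique_recovery :: "real ^ 'm ^ 'n \<Rightarrow> real ^ 'm \<Rightarrow> bool" where
  "l1_unique_recovery A x \<longleftrightarrow>
     (\<forall>z. A *v z = A *v x \<and> z \<noteq> x \<longrightarrow> l1norm x < l1norm z)"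

definition gram :: "real ^ 'm ^ 'n \<Rightarrow> 'm \<Rightarrow> 'm \<Rightarrow> real" where
  "gram A i j = column i A \<bullet> column j A"

definition nu :: "real ^ 'm ^ 'n \<Rightarrow> 'm \<Rightarrow> real" where
  "nu A i = Max {\<bar>gram A i j\<bar> / gram A i i | j. j \<noteq> i}"

definition rho :: "real ^ 'm ^ 'n \<Rightarrow> 'm \<Rightarrow> real" where
  "rho A i = nu A i / (nu A i + 1)"

end

theory Submission
  imports Defs
begin

text \<open>
If A h = 0, pairing with the i-th column gives c_ii h_i = - (sum over j \<noteq> i of c_ij h_j),
so |h_i| \<le> nu(i) (|h|_1 - |h_i|), i.e. |h_i| \<le> rho(i) |h|_1. The rho-sum over the
support S of x is at most the sum of the |S| largest scores, hence below 1/2, so every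
nonzero kernel vector h puts less than half of its l1 mass on S. This null space property
makes x the unique l1 minimiser: for z = x + h,
|z|_1 \<ge> |x|_1 - |h on S|_1 + |h off S|_1 > |x|_1.
\<close>

lemma ex_other_if_card_gt_1:
  assumes "1 < CARD('a::finite)"
  shows "\<exists>j::'a. j \<noteq> i"
  using assms by (metis UNIV_witness is_singleton_altdef is_singleton_iff_ex1 less_numeral_extra(4))

lemma antitone_on_prefix:
  fixes f :: "nat \<Rightarrow> 'a::order"
  assumes "\<And>j. Suc j < M \<Longrightarrow> f (Suc j) \<le> f j" "i \<le> j" "j < M"
  shows "f j \<le> f i"
  using assms(2,3) by (induction j rule: dec_induct) (auto intro: order_trans assms(1))

lemma sum_le_sum_prefix_if_antitone:
  fixes f :: "nat \<Rightarrow> 'a::ordered_comm_monoid_add"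
  assumes "\<And>j. Suc j < M \<Longrightarrow> f (Suc j) \<le> f j" "T \<subseteq> {..<M}"
  shows "sum f T \<le> sum f {..<card T}"
  using assms(2)
proof (induction "card T" arbitrary: T)
  case 0
  then show ?case by (simp add: finite_subset)
next
  case (Suc k)
  have "finite T" using Suc.prems finite_subset by blast
  define t where "t = Max T"
  have "t \<in> T" using \<open>finite T\<close> Suc.hyps(2) t_def by (metis Max_in card.empty nat.distinct(1))
  have "T \<subseteq> {..t}" using Max_ge[OF \<open>finite T\<close>] t_def by blast
  then have "k \<le> t" using card_mono[of "{..t}" T] Suc.hyps(2) by simp
  have "sum f T = sum f (T - {t}) + f t"
    using \<open>finite T\<close> \<open>t \<in> T\<close> by (simp add: sum.remove add.commute)
  also have "\<dots> \<le> sum f {..<k} + f k"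
  proof (rule add_mono)
    have "k = card (T - {t})" using Suc.hyps(2) \<open>finite T\<close> \<open>t \<in> T\<close> by simp
    then show "sum f (T - {t}) \<le> sum f {..<k}"
      using Suc.hyps(1) Suc.prems by auto
    show "f t \<le> f k"
      using antitone_on_prefix[of M f, OF assms(1) \<open>k \<le> t\<close>] \<open>t \<in> T\<close> Suc.prems by auto
  qed
  also have "\<dots> = sum f {..<card T}" by (simp flip: Suc.hyps(2))
  finally show ?case .
qed

lemma sum_lt_if_card_le_greatest_prefix:
  fixes g :: "'a \<Rightarrow> real" and s :: "nat \<Rightarrow> 'a"
  assumes bij: "bij_betw s {..<M} UNIV"
    and sorted: "\<forall>j. Suc j < M \<longrightarrow> g (s (Suc j)) \<le> g (s j)"
    and nonneg: "\<And>i. 0 \<le> g i" and "0 < c"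
    and card: "card S \<le> (GREATEST l. l \<le> M \<and> (\<Sum>j<l. g (s j)) < c)"
  shows "(\<Sum>i\<in>S. g i) < c"
proof -
  define L where "L = (GREATEST l. l \<le> M \<and> (\<Sum>j<l. g (s j)) < c)"
  have "L \<le> M \<and> (\<Sum>j<L. g (s j)) < c"
    unfolding L_def by (rule GreatestI_nat[where k = 0 and b = M]) (simp_all add: \<open>0 < c\<close>)
  define T where "T = {j\<in>{..<M}. s j \<in> S}"
  have "T \<subseteq> {..<M}" by (auto simp: T_def)
  have "inj_on s T" using bij \<open>T \<subseteq> {..<M}\<close> by (meson bij_betw_def inj_on_subset)
  have "S = s ` T" using bij unfolding bij_betw_def T_def by auto
  have "(\<Sum>i\<in>S. g i) = (\<Sum>j\<in>T. g (s j))"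
    unfolding \<open>S = s ` T\<close> by (rule sum.reindex[OF \<open>inj_on s T\<close>, unfolded comp_def])
  also have "\<dots> \<le> (\<Sum>j<card T. g (s j))"
    using sorted \<open>T \<subseteq> {..<M}\<close> by (intro sum_le_sum_prefix_if_antitone[where M = M]) simp_all
  also have "\<dots> \<le> (\<Sum>j<L. g (s j))"
  proof (rule sum_mono2)
    have "card T = card S" unfolding \<open>S = s ` T\<close> by (rule card_image[symmetric, OF \<open>inj_on s T\<close>])
    then show "{..<card T} \<subseteq> {..<L}" using card by (simp add: L_def)
  qed (simp_all add: nonneg)
  finally show ?thesis using \<open>L \<le> M \<and> _\<close> by simp
qed

lemma gram_kernel_sum_eq_zero:
  fixes A :: "real ^ 'm ^ 'n"
  assumes "A *v h = 0"
  shows "(\<Sum>j\<in>UNIV. h $ j * gram A i j) = 0"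
proof -
  have "A *v h = (\<Sum>j\<in>UNIV. h $ j *\<^sub>R column j A)"
    by (simp add: vec_eq_iff matrix_vector_mult_def column_def sum_component mult.commute)
  then have "column i A \<bullet> (A *v h) = (\<Sum>j\<in>UNIV. h $ j * gram A i j)"
    by (simp only: gram_def inner_sum_right inner_scaleR_right)
  with assms show ?thesis by simp
qed

lemma abs_gram_div_le_nu:
  fixes A :: "real ^ 'm ^ 'n"
  assumes "j \<noteq> i"
  shows "\<bar>gram A i j\<bar> / gram A i i \<le> nu A i"
proof -
  have "finite {\<bar>gram A i j\<bar> / gram A i i | j. j \<noteq> i}"
    by (rule finite_image_set) simp
  then show ?thesis unfolding nu_def using assms by (blast intro: Max_ge)
qed

lemma nu_nonneg:
  fixes A :: "real ^ 'm ^ 'n"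
  assumes "j \<noteq> i"
  shows "0 \<le> nu A i"
proof -
  have "0 \<le> \<bar>gram A i j\<bar> / gram A i i" by (simp add: gram_def)
  with abs_gram_div_le_nu[of j i A] assms show ?thesis by linarith
qed

lemma rho_nonneg:
  fixes A :: "real ^ 'm ^ 'n"
  assumes "j \<noteq> i"
  shows "0 \<le> rho A i"
  using nu_nonneg[of j i A] assms by (simp add: rho_def)

lemma l1norm_split:
  "l1norm h = (\<Sum>i\<in>S. \<bar>h $ i\<bar>) + (\<Sum>i\<in>-S. \<bar>h $ i\<bar>)"
proof -
  have "l1norm h = (\<Sum>i\<in>UNIV - S. \<bar>h $ i\<bar>) + (\<Sum>i\<in>S. \<bar>h $ i\<bar>)"
    unfolding l1norm_def by (rule sum.subset_diff) auto
  then show ?thesis by (simp add: Compl_eq_Diff_UNIV)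
qed

lemma abs_kernel_component_le_rho:
  fixes A :: "real ^ 'm ^ 'n"
  assumes "A *v h = 0" and "column i A \<noteq> 0" and "j \<noteq> i"
  shows "\<bar>h $ i\<bar> \<le> rho A i * l1norm h"
proof -
  let ?r = "\<Sum>k\<in>-{i}. \<bar>h $ k\<bar>"
  have cii: "0 < gram A i i" using assms(2) by (simp add: gram_def)
  have "(\<Sum>k\<in>UNIV. h $ k * gram A i k) = h $ i * gram A i i + (\<Sum>k\<in>-{i}. h $ k * gram A i k)"
    by (simp add: sum.remove Compl_eq_Diff_UNIV)
  then have "h $ i * gram A i i = - (\<Sum>k\<in>-{i}. h $ k * gram A i k)"
    using gram_kernel_sum_eq_zero[OF assms(1)] by simp
  then have "\<bar>h $ i\<bar> * gram A i i = \<bar>\<Sum>k\<in>-{i}. h $ k * gram A i k\<bar>"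
    using cii by (metis abs_minus_cancel abs_mult abs_of_pos)
  also have "\<dots> \<le> (\<Sum>k\<in>-{i}. \<bar>h $ k\<bar> * \<bar>gram A i k\<bar>)"
    by (rule order_trans[OF sum_abs]) (simp add: abs_mult)
  also have "\<dots> \<le> (\<Sum>k\<in>-{i}. \<bar>h $ k\<bar> * (nu A i * gram A i i))"
  proof (rule sum_mono)
    fix k assume "k \<in> -{i}"
    then have "\<bar>gram A i k\<bar> \<le> nu A i * gram A i i"
      using abs_gram_div_le_nu[of k i A] cii by (simp add: pos_divide_le_eq)
    then show "\<bar>h $ k\<bar> * \<bar>gram A i k\<bar> \<le> \<bar>h $ k\<bar> * (nu A i * gram A i i)"
      by (simp add: mult_left_mono)
  qed
  also have "\<dots> = (?r * nu A i) * gram A i i"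
    by (simp add: sum_distrib_right mult.assoc)
  finally have "\<bar>h $ i\<bar> \<le> ?r * nu A i"
    using cii by (rule mult_right_le_imp_le)
  moreover have "l1norm h = \<bar>h $ i\<bar> + ?r"
    using l1norm_split[of h "{i}"] by simp
  ultimately have "\<bar>h $ i\<bar> * (nu A i + 1) \<le> nu A i * l1norm h"
    by (simp add: algebra_simps)
  moreover have "0 < nu A i + 1" using nu_nonneg[of j i A] assms(3) by linarith
  ultimately show ?thesis by (simp add: rho_def pos_le_divide_eq)
qed

lemma null_space_property_if_sum_rho_lt_half:
  fixes A :: "real ^ 'm ^ 'n"
  assumes "\<forall>i. column i A \<noteq> 0" and "1 < CARD('m)"
    and "(\<Sum>i\<in>S. rho A i) < 1/2"
    and "A *v h = 0" and "h \<noteq> 0"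
  shows "(\<Sum>i\<in>S. \<bar>h $ i\<bar>) < (\<Sum>i\<in>-S. \<bar>h $ i\<bar>)"
proof -
  have "0 < l1norm h"
  proof -
    obtain k where "h $ k \<noteq> 0" using assms(5) by (metis vec_eq_iff zero_index)
    then have "0 < \<bar>h $ k\<bar>" by simp
    also have "\<bar>h $ k\<bar> \<le> l1norm h" unfolding l1norm_def by (rule member_le_sum) auto
    finally show ?thesis .
  qed
  have "(\<Sum>i\<in>S. \<bar>h $ i\<bar>) \<le> (\<Sum>i\<in>S. rho A i * l1norm h)"
  proof (rule sum_mono)
    fix i :: 'm
    obtain j where "j \<noteq> i" using ex_other_if_card_gt_1[OF assms(2)] by blast
    then show "\<bar>h $ i\<bar> \<le> rho A i * l1norm h"
      using abs_kernel_component_le_rho[OF assms(4)] assms(1) by blast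
  qed
  also have "\<dots> = (\<Sum>i\<in>S. rho A i) * l1norm h"
    by (simp add: sum_distrib_right)
  also have "\<dots> < 1/2 * l1norm h"
    using assms(3) \<open>0 < l1norm h\<close> by (simp add: mult_strict_right_mono)
  finally show ?thesis using l1norm_split[of h S] by simp
qed

lemma l1_unique_recovery_if_null_space_property:
  fixes A :: "real ^ 'm ^ 'n"
  assumes "\<And>h. A *v h = 0 \<Longrightarrow> h \<noteq> 0 \<Longrightarrow> (\<Sum>i\<in>S. \<bar>h $ i\<bar>) < (\<Sum>i\<in>-S. \<bar>h $ i\<bar>)"
    and "\<And>i. i \<notin> S \<Longrightarrow> x $ i = 0"
  shows "l1_unique_recovery A x"
  unfolding l1_unique_recovery_def
proof (intro allI impI)
  fix z assume z: "A *v z = A *v x \<and> z \<noteq> x"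
  define h where "h = z - x"
  have "A *v h = 0" "h \<noteq> 0"
    using z by (simp_all add: h_def matrix_vector_mult_diff_distrib)
  have "l1norm x = (\<Sum>i\<in>S. \<bar>x $ i\<bar>)"
    using l1norm_split[of x S] assms(2) by simp
  also have "\<dots> \<le> (\<Sum>i\<in>S. \<bar>z $ i\<bar>) + (\<Sum>i\<in>S. \<bar>h $ i\<bar>)"
    by (simp add: h_def flip: sum.distrib) (rule sum_mono, simp add: abs_triangle_ineq4)
  also have "\<dots> < (\<Sum>i\<in>S. \<bar>z $ i\<bar>) + (\<Sum>i\<in>-S. \<bar>z $ i\<bar>)"
    using assms(1)[OF \<open>A *v h = 0\<close> \<open>h \<noteq> 0\<close>] assms(2) by (simp add: h_def)
  also have "\<dots> = l1norm z" by (rule l1norm_split[symmetric])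
  finally show "l1norm x < l1norm z" .
qed

theorem corollary1:
  fixes A :: "real ^ 'm ^ 'n"
    and s :: "nat \<Rightarrow> 'm"
    and x :: "real ^ 'm"
  assumes "CARD('n) < CARD('m)"
    and "\<forall>i. column i A \<noteq> 0"
    and "bij_betw s {..<CARD('m)} UNIV"
    and "\<forall>j. Suc j < CARD('m) \<longrightarrow> rho A (s (Suc j)) \<le> rho A (s j)"
    and "l0norm x \<le> (GREATEST l. l \<le> CARD('m) \<and> (\<Sum>j<l. rho A (s j)) < 1/2)"
  shows "l1_unique_recovery A x"
proof -
  define S where "S = {i. x $ i \<noteq> 0}"
  \<comment> \<open>n < m is only needed for m > 1, which keeps the maximum defining nu nonempty.\<close>
  have "0 < CARD('n)" by simp
  with assms(1) have "1 < CARD('m)" by linarith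
  have "0 \<le> rho A i" for i
    using ex_other_if_card_gt_1[OF \<open>1 < CARD('m)\<close>, of i] rho_nonneg by blast
  then have "(\<Sum>i\<in>S. rho A i) < 1/2"
    using assms(3-5) by (intro sum_lt_if_card_le_greatest_prefix) (simp_all add: S_def l0norm_def)
  then show ?thesis
    using assms(2) \<open>1 < CARD('m)\<close>
    by (intro l1_unique_recovery_if_null_space_property null_space_property_if_sum_rho_lt_half)
       (auto simp: S_def)
qed

end
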